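(* Let $d$ be odd and let $a,b,c\geq 1$ be integers with $2a+2b+2c=d+1$. For each $j=1,2,\ldots,b$, the couple $(D(a,b,c),(2j+1,0))$ is not realizable: there is no monic real polynomial of degree $d$ with all coefficients non-zero, defining the sign pattern $D(a,b,c)$, having exactly $2j+1$ positive simple roots and no other real roots.
   Context: A monic polynomial $x^d+\sum_{j<d}a_jx^j$ with all $a_j\neq0$ defines the sign pattern $(+,\operatorname{sign}(a_{d-1}),\ldots,\operatorname{sign}(a_0))$. $D(a,b,c)$ denotes the sign pattern of length $d+1$ (listed from the coefficient of $x^d$ down to the constant term) consisting of $2a$ pluses, followed by $b$ pairs "$-,+$", followed by $2c$ minuses. A monic polynomial realizes $(\sigma,(pos,neg))$ if it has all coefficients non-zero, defines $\sigma$, has exactly $pos$ positive and $neg$ negative real roots, all simple, and no other real roots. *)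

theory Defs
  imports "HOL-Computational_Algebra.Polynomial"
begin

text \<open>Sign patterns are lists of booleans (True = plus, False = minus), listed from the
coefficient of x^d down to the constant term; a pattern of length d+1.\<close>

definition D_pattern :: "nat \<Rightarrow> nat \<Rightarrow> nat \<Rightarrow> bool list" where
  "D_pattern a b c = replicate (2*a) True @ concat (replicate b [False, True]) @ replicate (2*c) False"

definition defines_sign_pattern :: "real poly \<Rightarrow> bool list \<Rightarrow> bool" where
  "defines_sign_pattern p \<sigma> \<longleftrightarrow>
     length \<sigma> = degree p + 1 \<and>
     (\<forall>k \<le> degree p. \<sigma> ! k = (coeff p (degree p - k) > 0))"

definition realizes :: "real poly \<Rightarrow> bool list \<Rightarrow> nat \<Rightarrow> nat \<Rightarrow> bool" where
  "realizes p \<sigma> pos neg \<longleftrightarrow>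
     lead_coeff p = 1 \<and>
     (\<forall>i \<le> degree p. coeff p i \<noteq> 0) \<and>
     defines_sign_pattern p \<sigma> \<and>
     card {x::real. x > 0 \<and> poly p x = 0} = pos \<and>
     card {x::real. x < 0 \<and> poly p x = 0} = neg \<and>
     (\<forall>x::real. poly p x = 0 \<longrightarrow> order x p = 1) \<and>
     poly p 0 \<noteq> 0"

end

theory Submission
  imports Defs
begin

text \<open>Write p(x) = E(x) + O(x) with E even and O odd. In D(a,b,c) the even coefficients
change sign once, at degree 2c, and the odd ones once, at degree 2b+2c, so E(x)/x^(2c) is
strictly increasing and O(x)/x^(2b+2c) is nondecreasing for x > 0. Since p(0) < 0 and p has
no negative roots, E(x) - O(x) = p(-x) < 0 for x > 0; at a positive root x this gives
O(x) > 0, so O/x^(2c) = x^(2b) O/x^(2b+2c) cannot decrease from x to any y > x. As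
E/x^(2c) = -O/x^(2c) at every root, there is no second root y > x: p has at most one
positive root, not 2j+1.\<close>

lemma concat_replicate_False_True: "concat (replicate b [False, True]) = map odd [0..<2*b]"
  by (induction b) (auto simp: replicate_append_same[symmetric])

lemma nth_D_pattern:
  assumes "i < 2*a + 2*b + 2*c"
  shows "D_pattern a b c ! i \<longleftrightarrow> i < 2*a \<or> (i < 2*a + 2*b \<and> odd i)"
  using assms by (auto simp: D_pattern_def concat_replicate_False_True nth_append)

lemma D_pattern_coeff_pos_iff:
  assumes "defines_sign_pattern p (D_pattern a b c)"
    and "2*a + 2*b + 2*c = degree p + 1" and "k \<le> degree p"
  shows "0 < coeff p k \<longleftrightarrow> 2*b + 2*c \<le> k \<or> (2*c \<le> k \<and> even k)"
proof -
  have "odd (degree p - k) \<longleftrightarrow> even k"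
    using assms(2,3) by (simp add: even_diff_nat) presburger
  moreover have "0 < coeff p k \<longleftrightarrow> D_pattern a b c ! (degree p - k)"
    using assms(1,3) unfolding defines_sign_pattern_def by auto
  ultimately show ?thesis
    using nth_D_pattern[of "degree p - k" a b c] assms(2,3) by auto
qed

definition even_part :: "real poly \<Rightarrow> real \<Rightarrow> real" where
  "even_part p x = (\<Sum>k\<le>degree p. (if even k then coeff p k else 0) * x^k)"

definition odd_part :: "real poly \<Rightarrow> real \<Rightarrow> real" where
  "odd_part p x = (\<Sum>k\<le>degree p. (if odd k then coeff p k else 0) * x^k)"

lemma poly_eq_even_part_plus_odd_part: "poly p x = even_part p x + odd_part p x"
  unfolding poly_altdef even_part_def odd_part_def sum.distrib[symmetric]
  by (intro sum.cong) auto

lemma poly_minus_eq_even_part_minus_odd_part: "poly p (-x) = even_part p x - odd_part p x"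
  unfolding poly_altdef even_part_def odd_part_def sum_subtractf[symmetric]
  by (intro sum.cong) auto

lemma mult_power_div_power_mono:
  fixes f x y :: real
  assumes "m \<le> k \<Longrightarrow> 0 \<le> f" and "k < m \<Longrightarrow> f \<le> 0" and "0 < x" and "x < y"
  shows "f * x^k / x^m \<le> f * y^k / y^m"
    and "k < m \<Longrightarrow> f < 0 \<Longrightarrow> f * x^k / x^m < f * y^k / y^m"
proof -
  have quotient: "z^k / z^m = power_int z (int k - int m)" if "0 < z" for z :: real
    using that by (simp add: power_int_diff)
  show "f * x^k / x^m \<le> f * y^k / y^m"
  proof (cases "m \<le> k")
    case True
    then show ?thesis
      using assms quotient[of x] quotient[of y]
      by (simp add: mult_left_mono power_int_mono flip: times_divide_eq_right)
  next
    case False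
    then show ?thesis
      using assms quotient[of x] quotient[of y]
      by (simp add: mult_left_mono_neg power_int_antimono flip: times_divide_eq_right)
  qed
  show "k < m \<Longrightarrow> f < 0 \<Longrightarrow> f * x^k / x^m < f * y^k / y^m"
    using assms quotient[of x] quotient[of y]
    by (simp add: mult_strict_left_mono_neg power_int_strict_antimono flip: times_divide_eq_right)
qed

lemma sum_div_power_mono:
  fixes f :: "nat \<Rightarrow> real"
  assumes "\<And>k. m \<le> k \<Longrightarrow> 0 \<le> f k" and "\<And>k. k < m \<Longrightarrow> f k \<le> 0" and "0 < x" and "x < y"
  shows "(\<Sum>k\<le>n. f k * x^k) / x^m \<le> (\<Sum>k\<le>n. f k * y^k) / y^m"
  unfolding sum_divide_distrib using assms
  by (intro sum_mono mult_power_div_power_mono(1)) auto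

lemma sum_div_power_strict_mono:
  fixes f :: "nat \<Rightarrow> real"
  assumes "\<And>k. m \<le> k \<Longrightarrow> 0 \<le> f k" and "\<And>k. k < m \<Longrightarrow> f k \<le> 0" and "0 < x" and "x < y"
    and "i \<le> n" and "i < m" and "f i < 0"
  shows "(\<Sum>k\<le>n. f k * x^k) / x^m < (\<Sum>k\<le>n. f k * y^k) / y^m"
  unfolding sum_divide_distrib
proof (rule sum_strict_mono_ex1)
  show "\<forall>k\<in>{..n}. f k * x^k / x^m \<le> f k * y^k / y^m"
    using assms by (auto intro: mult_power_div_power_mono(1))
  show "\<exists>k\<in>{..n}. f k * x^k / x^m < f k * y^k / y^m"
    using assms by (intro bexI[of _ i] mult_power_div_power_mono(2)) auto
qed simp

lemma poly_neg_if_no_negative_roots: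
  fixes p :: "real poly"
  assumes "poly p 0 < 0" and "\<And>z. z < 0 \<Longrightarrow> poly p z \<noteq> 0" and "x < 0"
  shows "poly p x < 0"
proof (rule ccontr)
  assume "\<not> poly p x < 0"
  then have "0 < poly p x" using assms(2,3) by force
  then obtain z where "x < z" "z < 0" "poly p z = 0"
    using poly_IVT_neg[of x 0 p] assms(1,3) by auto
  then show False using assms(2) by auto
qed

lemma card_positive_roots_le_1:
  fixes p :: "real poly"
  assumes even_signs: "\<And>k. even k \<Longrightarrow> (k < m \<longrightarrow> coeff p k \<le> 0) \<and> (m \<le> k \<longrightarrow> 0 \<le> coeff p k)"
    and odd_signs: "\<And>k. odd k \<Longrightarrow> (k < n \<longrightarrow> coeff p k \<le> 0) \<and> (n \<le> k \<longrightarrow> 0 \<le> coeff p k)"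
    and "m \<le> n" and "0 < m" and "coeff p 0 < 0"
    and no_negative_roots: "\<And>z. z < 0 \<Longrightarrow> poly p z \<noteq> 0"
  shows "card {x. 0 < x \<and> poly p x = 0} \<le> 1"
proof -
  have two_roots_absurd: False if "0 < x" "x < y" "poly p x = 0" "poly p y = 0" for x y
  proof -
    let ?E = "\<lambda>z. even_part p z / z^m" and ?O = "\<lambda>z. odd_part p z / z^m"
    have "?E x < ?E y"
      unfolding even_part_def using that even_signs \<open>0 < m\<close> \<open>coeff p 0 < 0\<close>
      by (intro sum_div_power_strict_mono[where i = 0]) auto
    have odd_x_pos: "0 < odd_part p x"
      using poly_neg_if_no_negative_roots[of p "-x"] no_negative_roots \<open>coeff p 0 < 0\<close> that
        poly_eq_even_part_plus_odd_part[of p x] poly_minus_eq_even_part_minus_odd_part[of p x]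
      by (simp add: poly_0_coeff_0)
    have odd_mono: "odd_part p x / x^n \<le> odd_part p y / y^n"
      unfolding odd_part_def using that odd_signs
      by (intro sum_div_power_mono) auto
    have "?O x = x^(n-m) * (odd_part p x / x^n)"
      using that \<open>m \<le> n\<close> by (simp add: power_diff)
    also have "\<dots> \<le> y^(n-m) * (odd_part p x / x^n)"
      using that odd_x_pos by (intro mult_right_mono power_mono) auto
    also have "\<dots> \<le> y^(n-m) * (odd_part p y / y^n)"
      using that odd_mono by (intro mult_left_mono) auto
    also have "\<dots> = ?O y"
      using that \<open>m \<le> n\<close> by (simp add: power_diff)
    finally have "?O x \<le> ?O y" .
    moreover have root_sum: "?E z + ?O z = 0" if "poly p z = 0" for z
      using that by (simp add: poly_eq_even_part_plus_odd_part flip: add_divide_distrib)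
    ultimately show False
      using \<open>?E x < ?E y\<close> root_sum[OF \<open>poly p x = 0\<close>] root_sum[OF \<open>poly p y = 0\<close>]
      by linarith
  qed
  have "p \<noteq> 0"
    using \<open>coeff p 0 < 0\<close> by auto
  then have "finite {x. 0 < x \<and> poly p x = 0}"
    using poly_roots_finite[of p] by (auto intro: finite_subset[rotated])
  moreover have "x = y" if "0 < x" "poly p x = 0" "0 < y" "poly p y = 0" for x y
    using that two_roots_absurd[of x y] two_roots_absurd[of y x] by (cases x y rule: linorder_cases) auto
  ultimately show ?thesis
    by (subst One_nat_def, subst card_le_Suc0_iff_eq) auto
qed

theorem theorem6:
  fixes d a b c j :: nat
  assumes "odd d" and "a \<ge> 1" and "b \<ge> 1" and "c \<ge> 1"
    and "2*a + 2*b + 2*c = d + 1"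
    and "1 \<le> j" and "j \<le> b"
  shows "\<not> (\<exists>p :: real poly. degree p = d \<and> realizes p (D_pattern a b c) (2*j+1) 0)"
proof
  assume "\<exists>p :: real poly. degree p = d \<and> realizes p (D_pattern a b c) (2*j+1) 0"
  then obtain p :: "real poly" where "degree p = d" and r: "realizes p (D_pattern a b c) (2*j+1) 0"
    by blast
  then have sign: "0 < coeff p k \<longleftrightarrow> 2*b + 2*c \<le> k \<or> (2*c \<le> k \<and> even k)"
    and nonzero: "coeff p k \<noteq> 0" if "k \<le> degree p" for k
    using D_pattern_coeff_pos_iff[of p a b c k] that assms(5) unfolding realizes_def by auto
  have coeff_signs: "(k < m \<longrightarrow> coeff p k \<le> 0) \<and> (m \<le> k \<longrightarrow> 0 \<le> coeff p k)"
    if "m = (if even k then 2*c else 2*b + 2*c)" for k m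
    using sign[of k] nonzero[of k] coeff_eq_0[of p k] that by (cases "k \<le> degree p") auto
  have "coeff p 0 < 0"
    using sign[of 0] nonzero[of 0] assms(4) by simp
  have "p \<noteq> 0"
    using r unfolding realizes_def by auto
  then have "finite {x::real. x < 0 \<and> poly p x = 0}"
    using poly_roots_finite[of p] by (auto intro: finite_subset[rotated])
  then have no_negative_roots: "poly p z \<noteq> 0" if "z < 0" for z
    using r that unfolding realizes_def by auto
  have "card {x. 0 < x \<and> poly p x = 0} \<le> 1"
    using coeff_signs assms(4) \<open>coeff p 0 < 0\<close> no_negative_roots
    by (intro card_positive_roots_le_1[of "2*c" p "2*b + 2*c"]) auto
  then show False
    using r assms(6) unfolding realizes_def by auto
qed

end
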